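(* Let $(\mathbb{R}^{n},g)$, $n\ge 3$, be Euclidean space with coordinates $x=(x_1,\dots,x_n)$ and $g_{ij}=\delta_{ij}$. Consider smooth functions $\varphi(\xi)$ and $u(\xi)$, where $\xi=\sum_{i=1}^{n}\alpha_i x_i$, $\alpha_i\in\mathbb{R}$, and $\sum_{i=1}^n\alpha_i^2=1$. Then $\overline g=\frac{1}{\varphi^2}g$ is a nontrivial $m$-quasi-Einstein metric with potential function $f=-m\log u$ and $\lambda\le 0$ if, and only if, $\varphi$ and $u$ satisfy $$(n-2)\frac{\varphi''}{\varphi}-\frac{m}{u}\Big(u''+2\frac{\varphi'}{\varphi}u'\Big)=0,$$ $$\frac{\varphi''}{\varphi}-(n-1)\frac{(\varphi')^2}{\varphi^2}+m\frac{\varphi'}{\varphi}\frac{u'}{u}=\frac{\lambda}{\varphi^2}.$$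
   Context: A Riemannian metric $\overline g$ (not necessarily complete) is called an $m$-quasi-Einstein metric with potential function $f$ if $\mathrm{Ric}_{\overline g}+\nabla^2 f-\frac{1}{m}\,df\otimes df=\lambda\,\overline g$ for some constants $\lambda$ and $m\neq 0$, where $\nabla^2 f$ is the Hessian of $f$ with respect to $\overline g$. It is called nontrivial if $f$ is not constant. Primes denote derivatives with respect to $\xi$. *)

theory Defs
  imports "HOL-Analysis.Analysis"
begin

text \<open>Coordinate Riemannian geometry on open subsets of R^n = real^'n.
  A metric is given by its component matrix G x $ i $ j in the standard coordinates.\<close>

definition pd :: "'n::finite \<Rightarrow> (real^'n \<Rightarrow> real) \<Rightarrow> real^'n \<Rightarrow> real" where
  "pd k F x = deriv (\<lambda>t. F (x + t *\<^sub>R axis k 1)) 0"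

definition ginv :: "(real^'n \<Rightarrow> real^'n^'n) \<Rightarrow> real^'n \<Rightarrow> real^'n^'n" where
  "ginv G x = matrix_inv (G x)"

definition christoffel :: "(real^'n::finite \<Rightarrow> real^'n^'n) \<Rightarrow> 'n \<Rightarrow> 'n \<Rightarrow> 'n \<Rightarrow> real^'n \<Rightarrow> real" where
  "christoffel G k i j x = (1/2) * (\<Sum>l\<in>UNIV. ginv G x $ k $ l *
      (pd i (\<lambda>y. G y $ j $ l) x + pd j (\<lambda>y. G y $ i $ l) x - pd l (\<lambda>y. G y $ i $ j) x))"

definition ricci :: "(real^'n::finite \<Rightarrow> real^'n^'n) \<Rightarrow> 'n \<Rightarrow> 'n \<Rightarrow> real^'n \<Rightarrow> real" where
  "ricci G i j x = (\<Sum>k\<in>UNIV. pd k (christoffel G k i j) x - pd j (christoffel G k i k) x)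
     + (\<Sum>k\<in>UNIV. \<Sum>p\<in>UNIV. christoffel G k k p x * christoffel G p i j x
                               - christoffel G k j p x * christoffel G p i k x)"

definition hessian :: "(real^'n::finite \<Rightarrow> real^'n^'n) \<Rightarrow> (real^'n \<Rightarrow> real) \<Rightarrow> 'n \<Rightarrow> 'n \<Rightarrow> real^'n \<Rightarrow> real" where
  "hessian G f i j x = pd i (pd j f) x - (\<Sum>k\<in>UNIV. christoffel G k i j x * pd k f x)"

definition quasi_einstein_on ::
  "(real^'n::finite) set \<Rightarrow> (real^'n \<Rightarrow> real^'n^'n) \<Rightarrow> (real^'n \<Rightarrow> real) \<Rightarrow> real \<Rightarrow> real \<Rightarrow> bool" where
  "quasi_einstein_on Om G f m lam \<longleftrightarrow> m \<noteq> 0 \<and>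
     (\<forall>x\<in>Om. \<forall>i j. ricci G i j x + hessian G f i j x - (1/m) * pd i f x * pd j f x = lam * G x $ i $ j)"

definition smooth_on_real :: "real set \<Rightarrow> (real \<Rightarrow> real) \<Rightarrow> bool" where
  "smooth_on_real I h \<longleftrightarrow> (\<forall>k. \<forall>t\<in>I. ((deriv ^^ k) h) differentiable (at t))"

end

theory Submission
  imports Defs
begin

(*
  Write g = e^(2w) delta with w = -ln phi(xi), xi = alpha . x and |alpha| = 1. Since w depends on
  xi only, dw = w' alpha and the Christoffel symbols of g are w' (alpha_i delta_jk + alpha_j delta_ik
  - alpha_k delta_ij). Contracting them using |alpha| = 1 shows that for f = h(xi) every term of
  Ric + Hess f - df (x) df / m - lambda g has the form alpha_i alpha_j A(xi) + delta_ij B(xi).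
  Such a tensor vanishes iff A = B = 0: contract it with alpha (x) alpha and take its trace, which
  gives A + B = 0 and A + n B = 0. For h = -m ln u the equations A = 0 and B = 0 are exactly
  the two displayed ODEs.
*)

lemma matrix_inv_scaleR_mat_1:
  fixes c :: real
  assumes "c \<noteq> 0"
  shows "matrix_inv (c *\<^sub>R (mat 1 :: real^'n::finite^'n)) = inverse c *\<^sub>R mat 1"
proof -
  let ?M = "c *\<^sub>R (mat 1 :: real^'n^'n)"
  have "\<exists>A. ?M ** A = mat 1 \<and> A ** ?M = mat 1"
    using assms by (intro exI[of _ "inverse c *\<^sub>R mat 1"])
      (simp add: matrix_scalar_ac scalar_matrix_assoc[symmetric])
  then have "?M ** matrix_inv ?M = mat 1"
    unfolding matrix_inv_def by (rule someI_ex[THEN conjunct1])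
  then have "c *\<^sub>R matrix_inv ?M = mat 1"
    by (metis scalar_matrix_assoc matrix_mul_lid)
  then show ?thesis
    using assms by (metis scaleR_scaleR left_inverse scaleR_one)
qed

lemma pd_ridge:
  fixes a x :: "real^'n::finite"
  assumes "open I" and x: "a \<bullet> x \<in> I"
    and F: "\<And>y. a \<bullet> y \<in> I \<Longrightarrow> F y = h (a \<bullet> y)"
    and h: "(h has_real_derivative D) (at (a \<bullet> x))"
  shows "pd k F x = a $ k * D"
proof -
  have line: "a \<bullet> (x + t *\<^sub>R axis k 1) = a \<bullet> x + t * a $ k" for t
    by (simp add: inner_add_right inner_axis)
  let ?S = "(\<lambda>t. a \<bullet> x + t * a $ k) -` I"
  have "open ?S"
    using \<open>open I\<close> by (intro open_vimage continuous_intros)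
  have "((\<lambda>t. h (a \<bullet> x + t * a $ k)) has_real_derivative D * a $ k) (at 0)"
    using h by (auto intro!: derivative_eq_intros DERIV_chain2[where f = h])
  then have "((\<lambda>t. F (x + t *\<^sub>R axis k 1)) has_real_derivative D * a $ k) (at 0)"
    by (rule has_field_derivative_transform_within_open[OF _ \<open>open ?S\<close>])
      (use x in \<open>auto simp: F line\<close>)
  then show ?thesis
    unfolding pd_def by (simp add: DERIV_imp_deriv mult.commute)
qed

(* The Christoffel symbols of e^(2w) delta are d_i w delta_jk + d_j w delta_ik - d_k w delta_ij;
   when dw is a multiple of a this is that multiple times conformal_gamma a. *)
definition conformal_gamma :: "real^'n \<Rightarrow> 'n \<Rightarrow> 'n \<Rightarrow> 'n \<Rightarrow> real" where
  "conformal_gamma a k i j = of_bool (j = k) * a $ i + of_bool (i = k) * a $ j - of_bool (i = j) * a $ k"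

lemma sum_conformal_gamma_alpha:
  fixes a :: "real^'n::finite"
  assumes "a \<bullet> a = 1"
  shows "(\<Sum>k\<in>UNIV. a $ k * conformal_gamma a k i j) = 2 * a $ i * a $ j - of_bool (i = j)"
proof -
  have "(\<Sum>k\<in>UNIV. a $ k * conformal_gamma a k i j)
      = (\<Sum>k\<in>UNIV. a $ i * a $ k * of_bool (j = k)) + (\<Sum>k\<in>UNIV. a $ j * a $ k * of_bool (i = k))
        - of_bool (i = j) * (a \<bullet> a)"
    by (simp add: conformal_gamma_def inner_vec_def algebra_simps sum.distrib sum_subtractf sum_distrib_left)
  then show ?thesis using assms by simp
qed

lemma conformal_gamma_trace:
  fixes a :: "real^'n::finite"
  shows "(\<Sum>k\<in>UNIV. conformal_gamma a k i k) = real CARD('n) * a $ i"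
    and "(\<Sum>k\<in>UNIV. conformal_gamma a k k i) = real CARD('n) * a $ i"
  by (simp_all add: conformal_gamma_def sum.distrib sum_subtractf eq_commute[of i])

lemma sum_conformal_gamma_square:
  fixes a :: "real^'n::finite"
  assumes unit: "a \<bullet> a = 1"
  shows "(\<Sum>k\<in>UNIV. \<Sum>p\<in>UNIV. conformal_gamma a k j p * conformal_gamma a p i k)
       = (real CARD('n) + 2) * a $ i * a $ j - 2 * of_bool (i = j)"
proof -
  have inner: "(\<Sum>p\<in>UNIV. conformal_gamma a k j p * conformal_gamma a p i k)
      = a $ j * conformal_gamma a k i k + of_bool (j = k) * (2 * a $ i * a $ k - of_bool (i = k))
        - conformal_gamma a j i k * a $ k" for k
    by (simp add: conformal_gamma_def [of a k j] left_diff_distrib distrib_right sum.distrib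
        sum_subtractf mult.assoc sum_conformal_gamma_alpha[OF unit] flip: sum_distrib_left)
  have "(\<Sum>k\<in>UNIV. conformal_gamma a j i k * a $ k) = of_bool (i = j)"
    using unit by (simp add: conformal_gamma_def inner_vec_def left_diff_distrib distrib_right
        sum.distrib sum_subtractf mult.assoc flip: sum_distrib_left)
  then have "(\<Sum>k\<in>UNIV. \<Sum>p\<in>UNIV. conformal_gamma a k j p * conformal_gamma a p i k)
      = a $ j * (real CARD('n) * a $ i) + (2 * a $ i * a $ j - of_bool (i = j)) - of_bool (i = j)"
    by (simp add: inner sum.distrib sum_subtractf conformal_gamma_trace flip: sum_distrib_left)
  then show ?thesis by (simp add: algebra_simps)
qed

lemma sum_conformal_gamma_trace_product:
  fixes a :: "real^'n::finite"
  assumes "a \<bullet> a = 1"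
  shows "(\<Sum>k\<in>UNIV. \<Sum>p\<in>UNIV. conformal_gamma a k k p * conformal_gamma a p i j)
       = real CARD('n) * (2 * a $ i * a $ j - of_bool (i = j))"
proof -
  have "(\<Sum>k\<in>UNIV. \<Sum>p\<in>UNIV. conformal_gamma a k k p * conformal_gamma a p i j)
      = (\<Sum>p\<in>UNIV. (\<Sum>k\<in>UNIV. conformal_gamma a k k p) * conformal_gamma a p i j)"
    by (subst sum.swap) (simp add: sum_distrib_right)
  also have "\<dots> = real CARD('n) * (\<Sum>p\<in>UNIV. a $ p * conformal_gamma a p i j)"
    by (simp add: conformal_gamma_trace sum_distrib_left mult.assoc)
  finally show ?thesis
    using assms by (simp add: sum_conformal_gamma_alpha)
qed

lemma ridge_tensor_eq_0_iff:
  fixes a :: "real^'n::finite"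
  assumes two: "CARD('n) \<ge> 2" and unit: "a \<bullet> a = 1"
  shows "(\<forall>i j. a $ i * a $ j * A + of_bool (i = j) * B = 0) \<longleftrightarrow> A = 0 \<and> B = 0"
proof
  assume vanish: "\<forall>i j. a $ i * a $ j * A + of_bool (i = j) * B = 0"
  have "0 = (\<Sum>i\<in>UNIV. \<Sum>j\<in>UNIV. a $ i * a $ j * (a $ i * a $ j * A + of_bool (i = j) * B))"
    using vanish by simp
  also have "\<dots> = A + B"
    using unit by (simp add: inner_vec_def distrib_left sum.distrib mult_ac
        flip: sum_distrib_left sum_distrib_right)
  finally have "A + B = 0" by simp
  have "a $ i * a $ i * A + B = 0" for i
    using vanish[rule_format, of i i] by simp
  then have "0 = (\<Sum>i\<in>UNIV. a $ i * a $ i * A + B)"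
    by simp
  also have "\<dots> = (a \<bullet> a) * A + real CARD('n) * B"
    by (simp add: inner_vec_def sum.distrib sum_distrib_right)
  finally have "A + real CARD('n) * B = 0" using unit by simp
  have "(real CARD('n) - 1) * B = (A + real CARD('n) * B) - (A + B)"
    by (simp add: algebra_simps)
  also have "\<dots> = 0"
    using \<open>A + B = 0\<close> \<open>A + real CARD('n) * B = 0\<close> by simp
  finally have "(real CARD('n) - 1) * B = 0" .
  moreover have "real CARD('n) - 1 \<noteq> 0"
    using two by simp
  ultimately show "A = 0 \<and> B = 0"
    using \<open>A + B = 0\<close> by simp
qed simp

lemma smooth_on_real_has_derivatives:
  assumes "smooth_on_real I f" and "t \<in> I"
  shows "(f has_real_derivative deriv f t) (at t)"
    and "(deriv f has_real_derivative deriv (deriv f) t) (at t)"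
proof -
  have "((deriv ^^ 0) f) differentiable (at t)" "((deriv ^^ 1) f) differentiable (at t)"
    using assms unfolding smooth_on_real_def by blast+
  then show "(f has_real_derivative deriv f t) (at t)"
    and "(deriv f has_real_derivative deriv (deriv f) t) (at t)"
    by (simp_all add: DERIV_deriv_iff_real_differentiable)
qed

locale ridge_conformal_metric =
  fixes \<alpha> :: "real^'n::finite" and I :: "real set" and \<phi> \<phi>' \<phi>'' :: "real \<Rightarrow> real"
  assumes unit: "\<alpha> \<bullet> \<alpha> = 1"
    and open_I: "open I"
    and \<phi>_nonzero: "t \<in> I \<Longrightarrow> \<phi> t \<noteq> 0"
    and \<phi>_deriv: "t \<in> I \<Longrightarrow> (\<phi> has_real_derivative \<phi>' t) (at t)"
    and \<phi>'_deriv: "t \<in> I \<Longrightarrow> (\<phi>' has_real_derivative \<phi>'' t) (at t)"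
begin

definition \<Omega> :: "(real^'n) set" where
  "\<Omega> = {x. \<alpha> \<bullet> x \<in> I}"

definition g :: "real^'n \<Rightarrow> real^'n^'n" where
  "g = (\<lambda>x. (1 / (\<phi> (\<alpha> \<bullet> x))^2) *\<^sub>R mat 1)"

(* g = e^(2w) delta with w = -ln phi(xi); rho and rho' are w' and w'' as functions of xi. *)
definition \<rho> :: "real \<Rightarrow> real" where
  "\<rho> t = - \<phi>' t / \<phi> t"

definition \<rho>' :: "real \<Rightarrow> real" where
  "\<rho>' t = ((\<phi>' t)^2 - \<phi>'' t * \<phi> t) / (\<phi> t)^2"

lemma \<rho>_deriv:
  assumes "t \<in> I"
  shows "(\<rho> has_real_derivative \<rho>' t) (at t)"
proof -
  have "((\<lambda>t. - \<phi>' t / \<phi> t) has_real_derivative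
      - ((\<phi>'' t * \<phi> t - \<phi>' t * \<phi>' t) / (\<phi> t * \<phi> t))) (at t)"
    using assms \<phi>_nonzero \<phi>_deriv \<phi>'_deriv by (auto intro!: derivative_eq_intros)
  then show ?thesis
    unfolding \<rho>_def[abs_def] \<rho>'_def
    by (rule DERIV_cong) (simp add: power2_eq_square diff_divide_distrib)
qed

lemma Ball_\<Omega>_iff: "(\<forall>x\<in>\<Omega>. P (\<alpha> \<bullet> x)) \<longleftrightarrow> (\<forall>t\<in>I. P t)"
proof
  assume P: "\<forall>x\<in>\<Omega>. P (\<alpha> \<bullet> x)"
  show "\<forall>t\<in>I. P t"
  proof
    fix t assume "t \<in> I"
    then have "t *\<^sub>R \<alpha> \<in> \<Omega>"
      using unit by (simp add: \<Omega>_def)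
    then show "P t"
      using P unit by fastforce
  qed
qed (simp add: \<Omega>_def)

lemma g_entry: "g x $ i $ j = of_bool (i = j) / (\<phi> (\<alpha> \<bullet> x))^2"
  by (simp add: g_def mat_def)

lemma ginv_g_entry:
  assumes "\<alpha> \<bullet> x \<in> I"
  shows "ginv g x $ k $ l = of_bool (k = l) * (\<phi> (\<alpha> \<bullet> x))^2"
proof -
  have "ginv g x = (\<phi> (\<alpha> \<bullet> x))^2 *\<^sub>R mat 1"
    using assms by (simp add: ginv_def g_def matrix_inv_scaleR_mat_1 \<phi>_nonzero)
  then show ?thesis
    by (simp add: mat_def)
qed

lemma pd_g:
  assumes "\<alpha> \<bullet> x \<in> I"
  shows "pd q (\<lambda>y. g y $ i $ j) x = \<alpha> $ q * (2 * \<rho> (\<alpha> \<bullet> x) / (\<phi> (\<alpha> \<bullet> x))^2) * of_bool (i = j)"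
proof -
  let ?t = "\<alpha> \<bullet> x"
  have "((\<lambda>t. of_bool (i = j) / (\<phi> t)^2) has_real_derivative
      - (of_bool (i = j) * (2 * \<phi> ?t * \<phi>' ?t)) / ((\<phi> ?t)^2 * (\<phi> ?t)^2)) (at ?t)"
    using assms \<phi>_nonzero \<phi>_deriv by (auto intro!: derivative_eq_intros)
  then have "pd q (\<lambda>y. g y $ i $ j) x
      = \<alpha> $ q * (- (of_bool (i = j) * (2 * \<phi> ?t * \<phi>' ?t)) / ((\<phi> ?t)^2 * (\<phi> ?t)^2))"
    using assms open_I by (intro pd_ridge) (auto simp: g_entry)
  then show ?thesis
    using \<phi>_nonzero[OF assms] by (simp add: \<rho>_def field_simps power2_eq_square)
qed

lemma christoffel_g:
  assumes "\<alpha> \<bullet> x \<in> I"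
  shows "christoffel g k i j x = \<rho> (\<alpha> \<bullet> x) * conformal_gamma \<alpha> k i j"
proof -
  let ?c = "2 * \<rho> (\<alpha> \<bullet> x) / (\<phi> (\<alpha> \<bullet> x))^2"
  have "christoffel g k i j x = 1/2 * ((\<phi> (\<alpha> \<bullet> x))^2 * (\<alpha> $ i * ?c * of_bool (j = k)
      + \<alpha> $ j * ?c * of_bool (i = k) - \<alpha> $ k * ?c * of_bool (i = j)))"
    using assms by (simp add: christoffel_def ginv_g_entry pd_g mult.assoc)
  also have "\<dots> = \<rho> (\<alpha> \<bullet> x) * conformal_gamma \<alpha> k i j"
    using \<phi>_nonzero[OF assms] by (simp add: conformal_gamma_def field_simps)
  finally show ?thesis .
qed

lemma pd_christoffel_g:
  assumes "\<alpha> \<bullet> x \<in> I"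
  shows "pd q (christoffel g k i j) x = \<alpha> $ q * (\<rho>' (\<alpha> \<bullet> x) * conformal_gamma \<alpha> k i j)"
  using assms open_I
  by (intro pd_ridge[where h = "\<lambda>t. \<rho> t * conformal_gamma \<alpha> k i j"])
    (auto simp: christoffel_g intro!: derivative_eq_intros \<rho>_deriv)

lemma ricci_g:
  assumes "\<alpha> \<bullet> x \<in> I"
  shows "ricci g i j x = (real CARD('n) - 2) * ((\<rho> (\<alpha> \<bullet> x))^2 - \<rho>' (\<alpha> \<bullet> x)) * \<alpha> $ i * \<alpha> $ j
      - (\<rho>' (\<alpha> \<bullet> x) + (real CARD('n) - 2) * (\<rho> (\<alpha> \<bullet> x))^2) * of_bool (i = j)"
proof -
  let ?\<Gamma> = "conformal_gamma \<alpha>" and ?r = "\<rho> (\<alpha> \<bullet> x)" and ?r' = "\<rho>' (\<alpha> \<bullet> x)"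
  have "ricci g i j x = ?r' * (\<Sum>k\<in>UNIV. \<alpha> $ k * ?\<Gamma> k i j) - ?r' * \<alpha> $ j * (\<Sum>k\<in>UNIV. ?\<Gamma> k i k)
      + ?r\<^sup>2 * (\<Sum>k\<in>UNIV. \<Sum>p\<in>UNIV. ?\<Gamma> k k p * ?\<Gamma> p i j)
      - ?r\<^sup>2 * (\<Sum>k\<in>UNIV. \<Sum>p\<in>UNIV. ?\<Gamma> k j p * ?\<Gamma> p i k)"
    using assms
    by (simp add: ricci_def christoffel_g pd_christoffel_g sum_subtractf sum_distrib_left
        algebra_simps power2_eq_square)
  then show ?thesis
    using unit by (simp add: sum_conformal_gamma_alpha conformal_gamma_trace
        sum_conformal_gamma_trace_product sum_conformal_gamma_square algebra_simps)
qed

lemma pd_potential: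
  assumes "\<alpha> \<bullet> x \<in> I" and "\<And>t. t \<in> I \<Longrightarrow> (h has_real_derivative h' t) (at t)"
  shows "pd k (\<lambda>y. h (\<alpha> \<bullet> y)) x = \<alpha> $ k * h' (\<alpha> \<bullet> x)"
  using assms open_I by (intro pd_ridge) auto

lemma hessian_g:
  assumes x: "\<alpha> \<bullet> x \<in> I"
    and h: "\<And>t. t \<in> I \<Longrightarrow> (h has_real_derivative h' t) (at t)"
    and h': "\<And>t. t \<in> I \<Longrightarrow> (h' has_real_derivative h'' t) (at t)"
  shows "hessian g (\<lambda>y. h (\<alpha> \<bullet> y)) i j x = h'' (\<alpha> \<bullet> x) * \<alpha> $ i * \<alpha> $ j
      - \<rho> (\<alpha> \<bullet> x) * h' (\<alpha> \<bullet> x) * (2 * \<alpha> $ i * \<alpha> $ j - of_bool (i = j))"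
proof -
  have "pd i (pd j (\<lambda>y. h (\<alpha> \<bullet> y))) x = \<alpha> $ i * (\<alpha> $ j * h'' (\<alpha> \<bullet> x))"
    by (rule pd_ridge[OF open_I x, where h = "\<lambda>t. \<alpha> $ j * h' t"])
      (auto simp: pd_potential[OF _ h] x intro!: derivative_eq_intros h')
  moreover have "(\<Sum>k\<in>UNIV. christoffel g k i j x * pd k (\<lambda>y. h (\<alpha> \<bullet> y)) x)
      = \<rho> (\<alpha> \<bullet> x) * h' (\<alpha> \<bullet> x) * (\<Sum>k\<in>UNIV. \<alpha> $ k * conformal_gamma \<alpha> k i j)"
    using x by (simp add: christoffel_g pd_potential[OF _ h] sum_distrib_left algebra_simps)
  ultimately show ?thesis
    using unit by (simp add: hessian_def sum_conformal_gamma_alpha algebra_simps)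
qed

lemma quasi_einstein_on_g_iff:
  assumes two: "CARD('n) \<ge> 2"
    and h: "\<And>t. t \<in> I \<Longrightarrow> (h has_real_derivative h' t) (at t)"
    and h': "\<And>t. t \<in> I \<Longrightarrow> (h' has_real_derivative h'' t) (at t)"
  shows "quasi_einstein_on \<Omega> g (\<lambda>y. h (\<alpha> \<bullet> y)) m lam \<longleftrightarrow> m \<noteq> 0 \<and> (\<forall>t\<in>I.
      (real CARD('n) - 2) * ((\<rho> t)\<^sup>2 - \<rho>' t) + h'' t - 2 * \<rho> t * h' t - (h' t)\<^sup>2 / m = 0 \<and>
      - \<rho>' t - (real CARD('n) - 2) * (\<rho> t)\<^sup>2 + \<rho> t * h' t - lam / (\<phi> t)\<^sup>2 = 0)"
proof -
  define A where "A t = (real CARD('n) - 2) * ((\<rho> t)\<^sup>2 - \<rho>' t) + h'' t - 2 * \<rho> t * h' t - (h' t)\<^sup>2 / m"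
    for t
  define B where "B t = - \<rho>' t - (real CARD('n) - 2) * (\<rho> t)\<^sup>2 + \<rho> t * h' t - lam / (\<phi> t)\<^sup>2"
    for t
  have tensor: "ricci g i j x + hessian g (\<lambda>y. h (\<alpha> \<bullet> y)) i j x
      - 1 / m * pd i (\<lambda>y. h (\<alpha> \<bullet> y)) x * pd j (\<lambda>y. h (\<alpha> \<bullet> y)) x - lam * g x $ i $ j
      = \<alpha> $ i * \<alpha> $ j * A (\<alpha> \<bullet> x) + of_bool (i = j) * B (\<alpha> \<bullet> x)"
    if "\<alpha> \<bullet> x \<in> I" for x i j
    using that by (simp add: ricci_g hessian_g[OF _ h h'] pd_potential[OF _ h] g_entry A_def B_def
        algebra_simps power2_eq_square)
  have "quasi_einstein_on \<Omega> g (\<lambda>y. h (\<alpha> \<bullet> y)) m lam \<longleftrightarrow>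
      m \<noteq> 0 \<and> (\<forall>x\<in>\<Omega>. \<forall>i j. \<alpha> $ i * \<alpha> $ j * A (\<alpha> \<bullet> x) + of_bool (i = j) * B (\<alpha> \<bullet> x) = 0)"
    unfolding quasi_einstein_on_def \<Omega>_def by (auto simp flip: tensor)
  also have "\<dots> \<longleftrightarrow> m \<noteq> 0 \<and> (\<forall>t\<in>I. A t = 0 \<and> B t = 0)"
    using Ball_\<Omega>_iff[where P = "\<lambda>t. A t = 0 \<and> B t = 0"]
    by (simp add: ridge_tensor_eq_0_iff[OF two unit])
  finally show ?thesis
    by (simp add: A_def B_def)
qed

end

theorem proposition2p2:
  fixes \<alpha> :: "real^'n::finite"
    and \<phi> u :: "real \<Rightarrow> real"
    and I :: "real set"
    and m lam :: real
  assumes n3: "CARD('n) \<ge> 3"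
    and alpha: "(\<Sum>i\<in>UNIV. (\<alpha> $ i)^2) = 1"
    and I: "open I" "is_interval I"
    and smooth: "smooth_on_real I \<phi>" "smooth_on_real I u"
    and pos: "\<forall>t\<in>I. \<phi> t \<noteq> 0 \<and> u t > 0"
    and m: "m \<noteq> 0"
    and lam: "lam \<le> 0"
    and nontriv: "\<not> (\<exists>c. \<forall>x\<in>{x. (\<Sum>i\<in>UNIV. \<alpha> $ i * x $ i) \<in> I}.
                        - m * ln (u (\<Sum>i\<in>UNIV. \<alpha> $ i * x $ i)) = c)"
  shows "quasi_einstein_on {x. (\<Sum>i\<in>UNIV. \<alpha> $ i * x $ i) \<in> I}
            (\<lambda>x. (1 / (\<phi> (\<Sum>i\<in>UNIV. \<alpha> $ i * x $ i))^2) *\<^sub>R mat 1)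
            (\<lambda>x. - m * ln (u (\<Sum>i\<in>UNIV. \<alpha> $ i * x $ i))) m lam
     \<longleftrightarrow> (\<forall>t\<in>I.
          (real CARD('n) - 2) * deriv (deriv \<phi>) t / \<phi> t
            - (m / u t) * (deriv (deriv u) t + 2 * (deriv \<phi> t / \<phi> t) * deriv u t) = 0
        \<and> deriv (deriv \<phi>) t / \<phi> t - (real CARD('n) - 1) * (deriv \<phi> t)^2 / (\<phi> t)^2
            + m * (deriv \<phi> t / \<phi> t) * (deriv u t / u t) = lam / (\<phi> t)^2)"
proof -
  have \<xi>: "(\<Sum>i\<in>UNIV. \<alpha> $ i * x $ i) = \<alpha> \<bullet> x" for x
    by (simp add: inner_vec_def)
  have unit: "\<alpha> \<bullet> \<alpha> = 1"
    using alpha by (simp add: inner_vec_def power2_eq_square)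
  interpret ridge_conformal_metric \<alpha> I \<phi> "deriv \<phi>" "deriv (deriv \<phi>)"
    using unit I(1) pos smooth_on_real_has_derivatives[OF smooth(1)] by unfold_locales auto
  define h' where "h' t = - m * deriv u t / u t" for t
  define h'' where "h'' t = - m * (deriv (deriv u) t * u t - (deriv u t)\<^sup>2) / (u t)\<^sup>2" for t
  have h: "((\<lambda>t. - m * ln (u t)) has_real_derivative h' t) (at t)"
    and h': "(h' has_real_derivative h'' t) (at t)" if "t \<in> I" for t
    using that pos smooth_on_real_has_derivatives[OF smooth(2) that] unfolding h'_def h''_def
    by (auto intro!: derivative_eq_intros simp: power2_eq_square field_simps)
  have A: "(real CARD('n) - 2) * ((\<rho> t)\<^sup>2 - \<rho>' t) + h'' t - 2 * \<rho> t * h' t - (h' t)\<^sup>2 / m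
      = (real CARD('n) - 2) * deriv (deriv \<phi>) t / \<phi> t
        - (m / u t) * (deriv (deriv u) t + 2 * (deriv \<phi> t / \<phi> t) * deriv u t)"
    and B: "- \<rho>' t - (real CARD('n) - 2) * (\<rho> t)\<^sup>2 + \<rho> t * h' t
      = deriv (deriv \<phi>) t / \<phi> t - (real CARD('n) - 1) * (deriv \<phi> t)\<^sup>2 / (\<phi> t)\<^sup>2
        + m * (deriv \<phi> t / \<phi> t) * (deriv u t / u t)" if "t \<in> I" for t
    using that pos m unfolding \<rho>_def \<rho>'_def h'_def h''_def
    by (auto simp: field_simps power2_eq_square)
  have "quasi_einstein_on \<Omega> g (\<lambda>x. - m * ln (u (\<alpha> \<bullet> x))) m lam \<longleftrightarrow> m \<noteq> 0 \<and> (\<forall>t\<in>I.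
      (real CARD('n) - 2) * ((\<rho> t)\<^sup>2 - \<rho>' t) + h'' t - 2 * \<rho> t * h' t - (h' t)\<^sup>2 / m = 0 \<and>
      - \<rho>' t - (real CARD('n) - 2) * (\<rho> t)\<^sup>2 + \<rho> t * h' t - lam / (\<phi> t)\<^sup>2 = 0)"
    using n3 by (intro quasi_einstein_on_g_iff h h') auto
  then show ?thesis
    unfolding \<xi> \<Omega>_def g_def using m by (simp add: A B)
qed

end
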